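(* Let $X$ be a nonempty set, $G\le S_X$ and $F=N_{S_X}(G)$. For every $x\in X/G$ and $y\in xG$ fix $g_y\in G$ with $xg_y=y$. For $f\in F$ and $\Lambda=(\lambda_x:x\in X/G)$ define $\Lambda f=(\kappa_x:x\in X/G)$ by $\kappa_x=((\lambda_{yg_y^{-1}})^{g_y})^f$ where $y=xf^{-1}$. Then: (i) this rule defines an action of $F$ on each of $\mathrm{Fol}_r(G)$, $\mathrm{Fol}_q(G)$, $\mathrm{Env}_r(G)$ and $\mathrm{Env}_q(G)$; (ii) the orbits of $F$ on $\mathrm{Env}_r(G)$ (resp. $\mathrm{Env}_q(G)$) are in one-to-one correspondence with isomorphism types of racks (resp. quandles) defined on $X$ with left multiplication group equal to $G$; (iii) if an orbit of $F$ on $\mathrm{Fol}_r(G)$ (resp. $\mathrm{Fol}_q(G)$) contains an element of $\mathrm{Env}_r(G)$ (resp. $\mathrm{Env}_q(G)$), then the entire orbit is a subset of $\mathrm{Env}_r(G)$ (resp. $\mathrm{Env}_q(G)$).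
   Context: Permutations act on the right ($xf$ is the image of $x$ under $f$; $fg$ means $f$ first, then $g$); $g^f=f^{-1}gf$, $f^G=\{f^g:g\in G\}$. For $G\le S_X$, $xG$ is the orbit of $x$, $G_x$ its stabilizer, $X/G$ a fixed complete set of orbit representatives; $C_G(H)$, $N_G(H)$, $Z(H)$ denote centralizer, normalizer and center. A left quasigroup is a groupoid $(X,* )$ whose left translations $L_x$ ($yL_x=x*y$) are bijections; a rack is a left quasigroup with $x*(y*z)=(x*y)*(x*z)$; a quandle is a rack with $x*x=x$; the left multiplication group is $\mathrm{LMlt}(X,* )=\langle L_x:x\in X\rangle$. A pair $(G,(\lambda_x:x\in X/G))$ is a rack folder (resp. quandle folder) if $\lambda_x\in C_G(G_x)$ (resp. $\lambda_x\in Z(G_x)$) for every $x\in X/G$, and a rack envelope (resp. quandle envelope) if moreover $\langle\bigcup_{x\in X/G}\lambda_x^G\rangle=G$. $\mathrm{Fol}_r(G)$, $\mathrm{Fol}_q(G)$, $\mathrm{Env}_r(G)$, $\mathrm{Env}_q(G)$ are the sets of rack folders, quandle folders, rack envelopes and quandle envelopes of the form $(G,\Lambda)$ (identified with the tuples $\Lambda$). A rack envelope $(G,\Lambda)$ corresponds to the rack $(X,* )$ with $L_y=(\lambda_x)^g$ whenever $x\in X/G$, $y\in xG$, $g\in G$, $xg=y$. *)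

theory Defs
  imports "HOL-Combinatorics.Permutations"
begin

text \<open>Right action x f is the function value f x; the product fg
(f first, then g) is g o f; conjugation g^f = f^-1 g f is the function f o g o inv f.\<close>

definition perm_subgroup :: "'a set \<Rightarrow> ('a \<Rightarrow> 'a) set \<Rightarrow> bool" where
  "perm_subgroup X G \<longleftrightarrow> G \<subseteq> {p. p permutes X} \<and> id \<in> G \<and>
     (\<forall>p\<in>G. \<forall>q\<in>G. p \<circ> q \<in> G) \<and> (\<forall>p\<in>G. inv p \<in> G)"

definition perm_gen :: "'a set \<Rightarrow> ('a \<Rightarrow> 'a) set \<Rightarrow> ('a \<Rightarrow> 'a) set" where
  "perm_gen X A = \<Inter>{H. perm_subgroup X H \<and> A \<subseteq> H}"

definition conj :: "('a \<Rightarrow> 'a) \<Rightarrow> ('a \<Rightarrow> 'a) \<Rightarrow> ('a \<Rightarrow> 'a)" where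
  "conj l f = f \<circ> l \<circ> inv f"

definition conj_class :: "('a \<Rightarrow> 'a) set \<Rightarrow> ('a \<Rightarrow> 'a) \<Rightarrow> ('a \<Rightarrow> 'a) set" where
  "conj_class G l = {conj l h | h. h \<in> G}"

definition normalizer :: "'a set \<Rightarrow> ('a \<Rightarrow> 'a) set \<Rightarrow> ('a \<Rightarrow> 'a) set" where
  "normalizer X G = {f. f permutes X \<and> (\<lambda>h. conj h f) ` G = G}"

definition orbit :: "('a \<Rightarrow> 'a) set \<Rightarrow> 'a \<Rightarrow> 'a set" where
  "orbit G x = {h x | h. h \<in> G}"

definition stab :: "('a \<Rightarrow> 'a) set \<Rightarrow> 'a \<Rightarrow> ('a \<Rightarrow> 'a) set" where
  "stab G x = {h \<in> G. h x = x}"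

definition centralizer :: "('a \<Rightarrow> 'a) set \<Rightarrow> ('a \<Rightarrow> 'a) set \<Rightarrow> ('a \<Rightarrow> 'a) set" where
  "centralizer G H = {c \<in> G. \<forall>h\<in>H. c \<circ> h = h \<circ> c}"

definition center :: "('a \<Rightarrow> 'a) set \<Rightarrow> ('a \<Rightarrow> 'a) set" where
  "center H = {c \<in> H. \<forall>h\<in>H. c \<circ> h = h \<circ> c}"

definition orbit_reps :: "'a set \<Rightarrow> ('a \<Rightarrow> 'a) set \<Rightarrow> 'a set \<Rightarrow> bool" where
  "orbit_reps X G R \<longleftrightarrow> R \<subseteq> X \<and> (\<forall>y\<in>X. \<exists>!r. r \<in> R \<and> y \<in> orbit G r)"

text \<open>Tuples (lambda_x : x in R) are functions, extended by id outside R.\<close>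
definition Fol_r :: "('a \<Rightarrow> 'a) set \<Rightarrow> 'a set \<Rightarrow> ('a \<Rightarrow> 'a \<Rightarrow> 'a) set" where
  "Fol_r G R = {\<Lambda>. (\<forall>x\<in>R. \<Lambda> x \<in> centralizer G (stab G x)) \<and> (\<forall>x. x \<notin> R \<longrightarrow> \<Lambda> x = id)}"

definition Fol_q :: "('a \<Rightarrow> 'a) set \<Rightarrow> 'a set \<Rightarrow> ('a \<Rightarrow> 'a \<Rightarrow> 'a) set" where
  "Fol_q G R = {\<Lambda>. (\<forall>x\<in>R. \<Lambda> x \<in> center (stab G x)) \<and> (\<forall>x. x \<notin> R \<longrightarrow> \<Lambda> x = id)}"

definition generates :: "'a set \<Rightarrow> ('a \<Rightarrow> 'a) set \<Rightarrow> 'a set \<Rightarrow> ('a \<Rightarrow> 'a \<Rightarrow> 'a) \<Rightarrow> bool" where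
  "generates X G R \<Lambda> \<longleftrightarrow> perm_gen X (\<Union>x\<in>R. conj_class G (\<Lambda> x)) = G"

definition Env_r :: "'a set \<Rightarrow> ('a \<Rightarrow> 'a) set \<Rightarrow> 'a set \<Rightarrow> ('a \<Rightarrow> 'a \<Rightarrow> 'a) set" where
  "Env_r X G R = {\<Lambda> \<in> Fol_r G R. generates X G R \<Lambda>}"

definition Env_q :: "'a set \<Rightarrow> ('a \<Rightarrow> 'a) set \<Rightarrow> 'a set \<Rightarrow> ('a \<Rightarrow> 'a \<Rightarrow> 'a) set" where
  "Env_q X G R = {\<Lambda> \<in> Fol_q G R. generates X G R \<Lambda>}"

definition act :: "'a set \<Rightarrow> ('a \<Rightarrow> 'a \<Rightarrow> 'a) \<Rightarrow> ('a \<Rightarrow> 'a) \<Rightarrow> ('a \<Rightarrow> 'a \<Rightarrow> 'a) \<Rightarrow> ('a \<Rightarrow> 'a \<Rightarrow> 'a)" where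
  "act R g f \<Lambda> = (\<lambda>x. if x \<in> R then
      (let y = inv f x in conj (conj (\<Lambda> (inv (g y) y)) (g y)) f) else id)"

definition rack_on :: "'a set \<Rightarrow> ('a \<Rightarrow> 'a \<Rightarrow> 'a) \<Rightarrow> bool" where
  "rack_on X op \<longleftrightarrow> (\<forall>x\<in>X. \<forall>y\<in>X. op x y \<in> X) \<and> (\<forall>x\<in>X. bij_betw (op x) X X) \<and>
     (\<forall>x\<in>X. \<forall>y\<in>X. \<forall>z\<in>X. op x (op y z) = op (op x y) (op x z))"

definition quandle_on :: "'a set \<Rightarrow> ('a \<Rightarrow> 'a \<Rightarrow> 'a) \<Rightarrow> bool" where
  "quandle_on X op \<longleftrightarrow> rack_on X op \<and> (\<forall>x\<in>X. op x x = x)"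

definition Lperm :: "'a set \<Rightarrow> ('a \<Rightarrow> 'a \<Rightarrow> 'a) \<Rightarrow> 'a \<Rightarrow> ('a \<Rightarrow> 'a)" where
  "Lperm X op x = (\<lambda>y. if y \<in> X then op x y else y)"

definition LMlt :: "'a set \<Rightarrow> ('a \<Rightarrow> 'a \<Rightarrow> 'a) \<Rightarrow> ('a \<Rightarrow> 'a) set" where
  "LMlt X op = perm_gen X (Lperm X op ` X)"

definition rack_iso :: "'a set \<Rightarrow> ('a \<Rightarrow> 'a \<Rightarrow> 'a) \<Rightarrow> ('a \<Rightarrow> 'a \<Rightarrow> 'a) \<Rightarrow> bool" where
  "rack_iso X op1 op2 \<longleftrightarrow> (\<exists>\<phi>. bij_betw \<phi> X X \<and> (\<forall>x\<in>X. \<forall>y\<in>X. \<phi> (op1 x y) = op2 (\<phi> x) (\<phi> y)))"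

text \<open>Rack of an envelope: L_y = (lambda_x)^g with x in R, x g = y (we take g = g_y).\<close>
definition rack_of :: "'a set \<Rightarrow> ('a \<Rightarrow> 'a \<Rightarrow> 'a) \<Rightarrow> ('a \<Rightarrow> 'a \<Rightarrow> 'a) \<Rightarrow> ('a \<Rightarrow> 'a \<Rightarrow> 'a)" where
  "rack_of R g \<Lambda> = (\<lambda>y. conj (\<Lambda> (inv (g y) y)) (g y))"

end

theory Submission
  imports Defs
begin

text \<open>
  The rack of a folder \<open>\<Lambda>\<close> is \<open>L\<^sub>y = (\<lambda>\<^bsub>y g\<^sub>y\<^sup>-\<^sup>1\<^esub>)\<^bsup>g\<^sub>y\<^esup>\<close>.
  Because \<open>\<lambda>\<^sub>x\<close> centralizes \<open>G\<^sub>x\<close>, the choice of the transporters \<open>g\<^sub>y\<close> is irrelevant and \<open>y \<mapsto> L\<^sub>y\<close> is \<open>G\<close>-equivariant: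
  \<open>L\<^bsub>y h\<^esub> = (L\<^sub>y)\<^sup>h\<close> for \<open>h \<in> G\<close>. As every \<open>L\<^sub>x\<close> lies in \<open>G\<close>, this equivariance is
  exactly self-distributivity, so every folder defines a rack (a quandle if \<open>\<lambda>\<^sub>x\<close> also fixes
  \<open>x\<close>), with left multiplication group \<open>G\<close> precisely when \<open>\<Lambda>\<close> is an envelope. Conversely,
  the left multiplication group of any rack acts equivariantly on its left translations, so
  the translations \<open>L\<^sub>x\<close>, \<open>x \<in> X/G\<close>, form an envelope whose rack is the given one.

  For \<open>f\<close> in the normalizer, the rack of \<open>\<Lambda>f\<close> is \<open>y \<mapsto> (L\<^bsub>y f\<^sup>-\<^sup>1\<^esub>)\<^sup>f\<close>; hence the rule is
  an action and \<open>f\<close> is an isomorphism from the rack of \<open>\<Lambda>\<close> onto that of \<open>\<Lambda>f\<close>. Conversely,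
  an isomorphism of the racks of two envelopes conjugates one generating set \<open>{L\<^sub>y}\<close> onto the
  other, so it normalizes \<open>G\<close> and carries the first envelope to the second. Part (iii)
  holds because a set closed under a group action is a union of orbits.
\<close>

section \<open>Conjugation of permutations\<close>

lemma conj_id_right [simp]: "conj l id = l"
  by (simp add: conj_def)

lemma conj_id_left: "bij f \<Longrightarrow> conj id f = id"
  by (simp add: conj_def bij_is_surj surj_iff[symmetric])

lemma conj_apply: "bij f \<Longrightarrow> conj l f (f x) = f (l x)"
  by (simp add: conj_def bij_is_inj)

lemma conj_conj: "bij a \<Longrightarrow> bij b \<Longrightarrow> conj (conj l a) b = conj l (b \<circ> a)"
  by (simp add: conj_def o_inv_distrib o_assoc)

lemma conj_comp: "bij f \<Longrightarrow> conj a f \<circ> conj b f = conj (a \<circ> b) f"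
  by (simp add: conj_def fun_eq_iff bij_is_inj)

lemma conj_conj_inv: "bij f \<Longrightarrow> conj (conj h f) (inv f) = h"
  by (simp add: conj_conj bij_imp_bij_inv bij_is_inj)

lemma conj_inv_conj: "bij f \<Longrightarrow> conj (conj h (inv f)) f = h"
  by (metis conj_conj_inv bij_imp_bij_inv inv_inv_eq)

lemma inv_conj: "bij f \<Longrightarrow> bij a \<Longrightarrow> inv (conj a f) = conj (inv a) f"
  by (simp add: conj_def o_inv_distrib bij_imp_bij_inv bij_comp inv_inv_eq o_assoc)

lemma conj_eq_self_iff_commute: "bij h \<Longrightarrow> conj l h = l \<longleftrightarrow> h \<circ> l = l \<circ> h"
  unfolding conj_def
  by (metis (no_types, lifting) bij_is_inj bij_is_surj comp_assoc comp_id inv_o_cancel surj_iff)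

lemma permutes_conj: "f permutes X \<Longrightarrow> h permutes X \<Longrightarrow> conj h f permutes X"
  unfolding conj_def by (intro permutes_compose permutes_inv)

lemma permutes_conj_eq_iff:
  assumes f: "f permutes X" and "p permutes X" "q permutes X"
  shows "conj p f = q \<longleftrightarrow> (\<forall>y\<in>X. f (p y) = q (f y))"
proof -
  have "conj p f = q \<longleftrightarrow> f \<circ> p = q \<circ> f"
    using permutes_inv_o[OF f] unfolding conj_def
    by (metis comp_assoc comp_id)
  also have "\<dots> \<longleftrightarrow> (\<forall>y\<in>X. f (p y) = q (f y))"
    using assms by (auto simp: fun_eq_iff permutes_not_in)
  finally show ?thesis .
qed

lemma permutes_hom_iff_conj:
  assumes f: "f permutes X"
    and L: "\<And>x. x \<in> X \<Longrightarrow> L x permutes X" and L': "\<And>x. x \<in> X \<Longrightarrow> L' x permutes X"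
  shows "(\<forall>x\<in>X. \<forall>y\<in>X. f (L x y) = L' (f x) (f y)) \<longleftrightarrow> (\<forall>x\<in>X. conj (L x) f = L' (f x))"
  using permutes_conj_eq_iff[OF f L L'] f by (simp add: permutes_in_image)

section \<open>Permutation groups, normalizers and centralizers\<close>

lemma perm_subgroup_permutes: "perm_subgroup X G \<Longrightarrow> h \<in> G \<Longrightarrow> h permutes X"
  and perm_subgroup_id: "perm_subgroup X G \<Longrightarrow> id \<in> G"
  and perm_subgroup_comp: "perm_subgroup X G \<Longrightarrow> a \<in> G \<Longrightarrow> b \<in> G \<Longrightarrow> a \<circ> b \<in> G"
  and perm_subgroup_inv: "perm_subgroup X G \<Longrightarrow> a \<in> G \<Longrightarrow> inv a \<in> G"
  by (auto simp: perm_subgroup_def)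

lemma perm_subgroup_conj: "perm_subgroup X G \<Longrightarrow> a \<in> G \<Longrightarrow> h \<in> G \<Longrightarrow> conj a h \<in> G"
  unfolding conj_def by (intro perm_subgroup_comp perm_subgroup_inv)

lemma perm_subgroup_permutations: "perm_subgroup X {p. p permutes X}"
  by (auto simp: perm_subgroup_def permutes_compose permutes_inv)

lemma perm_subgroup_Inter:
  assumes "\<H> \<noteq> {}" and "\<And>H. H \<in> \<H> \<Longrightarrow> perm_subgroup X H"
  shows "perm_subgroup X (\<Inter>\<H>)"
  using assms unfolding perm_subgroup_def by blast

lemma perm_subgroup_perm_gen: "A \<subseteq> {p. p permutes X} \<Longrightarrow> perm_subgroup X (perm_gen X A)"
  unfolding perm_gen_def
  by (rule perm_subgroup_Inter) (use perm_subgroup_permutations in auto)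

lemma perm_gen_superset: "A \<subseteq> perm_gen X A"
  by (auto simp: perm_gen_def)

lemma perm_gen_least: "perm_subgroup X H \<Longrightarrow> A \<subseteq> H \<Longrightarrow> perm_gen X A \<subseteq> H"
  by (auto simp: perm_gen_def)

lemma perm_subgroup_conj_image:
  assumes H: "perm_subgroup X H" and f: "f permutes X"
  shows "perm_subgroup X ((\<lambda>h. conj h f) ` H)"
  unfolding perm_subgroup_def
proof (intro conjI ballI)
  have bf: "bij f" using f permutes_bij by blast
  show "(\<lambda>h. conj h f) ` H \<subseteq> {p. p permutes X}"
    using f perm_subgroup_permutes[OF H] permutes_conj by blast
  show "id \<in> (\<lambda>h. conj h f) ` H"
    using conj_id_left[OF bf] perm_subgroup_id[OF H] by force
next
  fix p q assume "p \<in> (\<lambda>h. conj h f) ` H" "q \<in> (\<lambda>h. conj h f) ` H"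
  then obtain a b where "a \<in> H" "b \<in> H" "p = conj a f" "q = conj b f" by blast
  then show "p \<circ> q \<in> (\<lambda>h. conj h f) ` H"
    using conj_comp[OF permutes_bij[OF f]] perm_subgroup_comp[OF H] by simp
next
  fix p assume "p \<in> (\<lambda>h. conj h f) ` H"
  then obtain a where a: "a \<in> H" "p = conj a f" by blast
  then have "inv p = conj (inv a) f"
    using inv_conj permutes_bij f perm_subgroup_permutes[OF H] by blast
  then show "inv p \<in> (\<lambda>h. conj h f) ` H"
    using a perm_subgroup_inv[OF H] by simp
qed

lemma perm_gen_conj_image_subset:
  assumes f: "f permutes X" and A: "A \<subseteq> {p. p permutes X}"
  shows "perm_gen X ((\<lambda>h. conj h f) ` A) \<subseteq> (\<lambda>h. conj h f) ` perm_gen X A"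
  by (intro perm_gen_least perm_subgroup_conj_image perm_subgroup_perm_gen f A image_mono
      perm_gen_superset)

lemma perm_gen_conj_image:
  assumes f: "f permutes X" and A: "A \<subseteq> {p. p permutes X}"
  shows "(\<lambda>h. conj h f) ` perm_gen X A = perm_gen X ((\<lambda>h. conj h f) ` A)"
proof
  show "perm_gen X ((\<lambda>h. conj h f) ` A) \<subseteq> (\<lambda>h. conj h f) ` perm_gen X A"
    using perm_gen_conj_image_subset[OF f A] .
next
  have bf: "bij f" using f permutes_bij by blast
  have A': "(\<lambda>h. conj h f) ` A \<subseteq> {p. p permutes X}"
    using A f permutes_conj by blast
  have "perm_gen X A \<subseteq> (\<lambda>h. conj h (inv f)) ` perm_gen X ((\<lambda>h. conj h f) ` A)"
    using perm_gen_conj_image_subset[OF permutes_inv[OF f] A']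
    by (simp add: image_image conj_conj_inv[OF bf])
  then show "(\<lambda>h. conj h f) ` perm_gen X A \<subseteq> perm_gen X ((\<lambda>h. conj h f) ` A)"
    by (auto simp: conj_inv_conj[OF bf])
qed

lemma perm_subgroup_equivariant:
  "perm_subgroup X {h. h permutes X \<and> (\<forall>x\<in>X. conj (L x) h = L (h x))}"
  (is "perm_subgroup X ?K")
  unfolding perm_subgroup_def
proof (intro conjI ballI)
  show "?K \<subseteq> {p. p permutes X}" "id \<in> ?K" by auto
next
  fix p q assume p: "p \<in> ?K" and q: "q \<in> ?K"
  have "conj (L x) (p \<circ> q) = L (p (q x))" if "x \<in> X" for x
  proof -
    have "bij p" "bij q" using p q permutes_bij by blast+
    then have "conj (L x) (p \<circ> q) = conj (conj (L x) q) p" by (simp add: conj_conj)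
    then show ?thesis using p q that by (simp add: permutes_in_image)
  qed
  then show "p \<circ> q \<in> ?K" using p q permutes_compose by auto
next
  fix p assume p: "p \<in> ?K"
  have "conj (L x) (inv p) = L (inv p x)" if x: "x \<in> X" for x
  proof -
    have "inv p x \<in> X" using p x by (simp add: permutes_inv permutes_in_image)
    then have "conj (L x) (inv p) = conj (conj (L (inv p x)) p) (inv p)"
      using p permutes_inverses(1) by fastforce
    then show ?thesis using p permutes_bij conj_conj_inv by fastforce
  qed
  then show "inv p \<in> ?K" using p permutes_inv by auto
qed

lemma orbit_self: "perm_subgroup X G \<Longrightarrow> x \<in> orbit G x"
  unfolding orbit_def by (metis (mono_tags, lifting) id_apply mem_Collect_eq perm_subgroup_id)

lemma orbit_closed:
  assumes G: "perm_subgroup X G" and y: "y \<in> orbit G x" and h: "h \<in> G"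
  shows "h y \<in> orbit G x"
proof -
  obtain k where "k \<in> G" "y = k x" using y by (auto simp: orbit_def)
  then show ?thesis
    using perm_subgroup_comp[OF G h \<open>k \<in> G\<close>] unfolding orbit_def
    by (intro CollectI exI[of _ "h \<circ> k"]) simp
qed

lemma normalizer_permutes: "f \<in> normalizer X G \<Longrightarrow> f permutes X"
  by (simp add: normalizer_def)

lemma normalizer_inv_in: "f \<in> normalizer X G \<Longrightarrow> x \<in> X \<Longrightarrow> inv f x \<in> X"
  by (simp add: normalizer_permutes permutes_inv permutes_in_image)

lemma normalizer_conj: "f \<in> normalizer X G \<Longrightarrow> h \<in> G \<Longrightarrow> conj h f \<in> G"
  by (auto simp: normalizer_def)

lemma normalizer_inv:
  assumes "f \<in> normalizer X G"
  shows "inv f \<in> normalizer X G"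
proof -
  have f: "f permutes X" and img: "(\<lambda>h. conj h f) ` G = G"
    using assms by (auto simp: normalizer_def)
  have "(\<lambda>h. conj h (inv f)) ` G = (\<lambda>h. conj h (inv f)) ` (\<lambda>h. conj h f) ` G"
    using img by simp
  also have "\<dots> = G"
    using f by (simp add: image_image conj_conj_inv permutes_bij)
  finally show ?thesis
    using f by (simp add: normalizer_def permutes_inv)
qed

lemma normalizer_comp:
  assumes "f \<in> normalizer X G" and "f' \<in> normalizer X G"
  shows "f' \<circ> f \<in> normalizer X G"
proof -
  have f: "f permutes X" "(\<lambda>h. conj h f) ` G = G"
    and f': "f' permutes X" "(\<lambda>h. conj h f') ` G = G"
    using assms by (auto simp: normalizer_def)
  have "bij f" "bij f'" using f f' permutes_bij by blast+
  then have "(\<lambda>h. conj h (f' \<circ> f)) ` G = (\<lambda>h. conj h f') ` (\<lambda>h. conj h f) ` G"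
    by (simp add: image_image conj_conj)
  with f f' show ?thesis
    by (simp add: normalizer_def permutes_compose)
qed

lemma perm_subgroup_subset_normalizer:
  assumes G: "perm_subgroup X G"
  shows "G \<subseteq> normalizer X G"
proof
  fix h assume h: "h \<in> G"
  have bh: "bij h" using perm_subgroup_permutes[OF G h] permutes_bij by blast
  have "k \<in> (\<lambda>k. conj k h) ` G" if "k \<in> G" for k
  proof (rule image_eqI)
    show "k = conj (conj k (inv h)) h" by (simp add: conj_inv_conj[OF bh])
    show "conj k (inv h) \<in> G" by (rule perm_subgroup_conj[OF G that perm_subgroup_inv[OF G h]])
  qed
  moreover have "(\<lambda>k. conj k h) ` G \<subseteq> G"
    by (rule image_subsetI) (rule perm_subgroup_conj[OF G _ h])
  ultimately have "(\<lambda>k. conj k h) ` G = G" by blast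
  then show "h \<in> normalizer X G"
    using perm_subgroup_permutes[OF G h] by (simp add: normalizer_def)
qed

lemma conj_centralizer_eq: "c \<in> centralizer G H \<Longrightarrow> h \<in> H \<Longrightarrow> bij h \<Longrightarrow> conj c h = c"
  by (simp add: centralizer_def conj_eq_self_iff_commute)

lemma center_stab_eq: "center (stab G y) = {c \<in> centralizer G (stab G y). c y = y}"
  by (auto simp: center_def centralizer_def stab_def)

lemma normalizer_conj_centralizer:
  assumes f: "f \<in> normalizer X G" and c: "c \<in> centralizer G (stab G y)"
  shows "conj c f \<in> centralizer G (stab G (f y))"
  unfolding centralizer_def
proof (intro CollectI conjI ballI)
  have bf: "bij f" using normalizer_permutes[OF f] permutes_bij by blast
  show "conj c f \<in> G" using c normalizer_conj[OF f] by (simp add: centralizer_def)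
  fix h assume h: "h \<in> stab G (f y)"
  have "conj h (inv f) \<in> stab G y"
    using h normalizer_conj[OF normalizer_inv[OF f]] bf
    by (simp add: stab_def conj_def inv_inv_eq bij_is_inj)
  then have "c \<circ> conj h (inv f) = conj h (inv f) \<circ> c"
    using c by (simp add: centralizer_def)
  then have "conj c f \<circ> conj (conj h (inv f)) f = conj (conj h (inv f)) f \<circ> conj c f"
    by (simp add: conj_comp[OF bf])
  then show "conj c f \<circ> h = h \<circ> conj c f"
    by (simp add: conj_inv_conj[OF bf])
qed

lemma normalizer_conj_center:
  assumes f: "f \<in> normalizer X G" and c: "c \<in> center (stab G y)"
  shows "conj c f \<in> center (stab G (f y))"
  using normalizer_conj_centralizer[OF f] c
    conj_apply[OF permutes_bij[OF normalizer_permutes[OF f]]]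
  by (simp add: center_stab_eq)

section \<open>Racks and their left multiplication groups\<close>

lemma Lperm_eq_self: "L x permutes X \<Longrightarrow> Lperm X L x = L x"
  by (auto simp: Lperm_def fun_eq_iff permutes_not_in)

lemma rack_on_Lperm_iff: "rack_on X (Lperm X op) \<longleftrightarrow> rack_on X op"
proof -
  have eq: "y \<in> X \<Longrightarrow> Lperm X op x y = op x y" for x y
    by (simp add: Lperm_def)
  have bij: "bij_betw (Lperm X op x) X X \<longleftrightarrow> bij_betw (op x) X X" for x
    by (rule bij_betw_cong) (simp add: eq)
  show ?thesis
  proof (cases "\<forall>x\<in>X. \<forall>y\<in>X. op x y \<in> X")
    case True
    then show ?thesis by (simp add: rack_on_def eq bij)
  next
    case False
    then obtain x y where "x \<in> X" "y \<in> X" "op x y \<notin> X" by blast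
    then have "\<not> rack_on X op" "\<not> rack_on X (Lperm X op)"
      unfolding rack_on_def using eq by metis+
    then show ?thesis by blast
  qed
qed

lemma rack_on_iff_conj:
  assumes L: "\<And>x. x \<in> X \<Longrightarrow> L x permutes X"
  shows "rack_on X L \<longleftrightarrow> (\<forall>x\<in>X. \<forall>y\<in>X. conj (L y) (L x) = L (L x y))"
proof -
  have "rack_on X L \<longleftrightarrow> (\<forall>x\<in>X. \<forall>y\<in>X. \<forall>z\<in>X. L x (L y z) = L (L x y) (L x z))"
    using L by (simp add: rack_on_def permutes_in_image permutes_imp_bij)
  also have "\<dots> \<longleftrightarrow> (\<forall>x\<in>X. \<forall>y\<in>X. conj (L y) (L x) = L (L x y))"
    by (intro ball_cong refl permutes_hom_iff_conj L)
  finally show ?thesis .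
qed

lemma rack_Lperm_permutes: "rack_on X op \<Longrightarrow> x \<in> X \<Longrightarrow> Lperm X op x permutes X"
  unfolding rack_on_def Lperm_def
  using permutes_restrict_id[of "op x" X] by (simp add: restrict_id_def)

lemma Lperm_equivariant:
  assumes rack: "rack_on X op" and h: "h \<in> LMlt X op" and x: "x \<in> X"
  shows "conj (Lperm X op x) h = Lperm X op (h x)"
proof -
  let ?L = "Lperm X op"
  let ?K = "{h. h permutes X \<and> (\<forall>x\<in>X. conj (?L x) h = ?L (h x))}"
  have L: "\<And>y. y \<in> X \<Longrightarrow> ?L y permutes X"
    using rack_Lperm_permutes[OF rack] .
  have "rack_on X ?L" using rack by (simp add: rack_on_Lperm_iff)
  then have "?L ` X \<subseteq> ?K"
    using L rack_on_iff_conj[of X ?L] by auto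
  then have "LMlt X op \<subseteq> ?K"
    unfolding LMlt_def by (rule perm_gen_least[OF perm_subgroup_equivariant])
  then show ?thesis using h x by blast
qed

lemma Lperm_in_centralizer_stab:
  assumes rack: "rack_on X op" and x: "x \<in> X"
  shows "Lperm X op x \<in> centralizer (LMlt X op) (stab (LMlt X op) x)"
proof -
  have sub: "perm_subgroup X (LMlt X op)"
    unfolding LMlt_def using rack_Lperm_permutes[OF rack] by (auto intro: perm_subgroup_perm_gen)
  have "Lperm X op x \<circ> h = h \<circ> Lperm X op x" if "h \<in> stab (LMlt X op) x" for h
  proof -
    have h: "h \<in> LMlt X op" "h x = x" using that by (auto simp: stab_def)
    then have "conj (Lperm X op x) h = Lperm X op x"
      using Lperm_equivariant[OF rack _ x] by simp
    then show ?thesis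
      using conj_eq_self_iff_commute perm_subgroup_permutes[OF sub h(1)] permutes_bij by metis
  qed
  moreover have "Lperm X op x \<in> LMlt X op"
    unfolding LMlt_def using x perm_gen_superset by blast
  ultimately show ?thesis by (simp add: centralizer_def)
qed

lemma Lperm_in_center_stab:
  assumes "quandle_on X op" and "x \<in> X"
  shows "Lperm X op x \<in> center (stab (LMlt X op) x)"
  using assms Lperm_in_centralizer_stab[of X op x]
  by (simp add: quandle_on_def center_stab_eq Lperm_def)

definition envelope_of_rack :: "'a set \<Rightarrow> 'a set \<Rightarrow> ('a \<Rightarrow> 'a \<Rightarrow> 'a) \<Rightarrow> 'a \<Rightarrow> 'a \<Rightarrow> 'a" where
  "envelope_of_rack X R op r = (if r \<in> R then Lperm X op r else id)"

section \<open>The rack of a folder\<close>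

lemma Fol_q_subset_Fol_r: "Fol_q G R \<subseteq> Fol_r G R"
  by (auto simp: Fol_q_def Fol_r_def center_stab_eq)

locale orbit_transversal =
  fixes X :: "'a set" and G :: "('a \<Rightarrow> 'a) set" and R :: "'a set" and g :: "'a \<Rightarrow> 'a \<Rightarrow> 'a"
  assumes subgroup: "perm_subgroup X G"
    and reps: "orbit_reps X G R"
    and transversal: "\<forall>x\<in>R. \<forall>y\<in>orbit G x. g y \<in> G \<and> g y x = y"
begin

abbreviation rep :: "'a \<Rightarrow> 'a" where
  "rep y \<equiv> inv (g y) y"

lemma G_permutes: "h \<in> G \<Longrightarrow> h permutes X"
  using perm_subgroup_permutes[OF subgroup] .

lemma G_bij: "h \<in> G \<Longrightarrow> bij h"
  using G_permutes permutes_bij by blast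

lemma reps_subset: "R \<subseteq> X"
  using reps by (simp add: orbit_reps_def)

lemma rep_eq: "r \<in> R \<Longrightarrow> y \<in> orbit G r \<Longrightarrow> rep y = r"
  using transversal G_permutes by (metis permutes_inverses(2))

lemma rep_in_reps: "y \<in> X \<Longrightarrow> rep y \<in> R"
  and in_orbit_rep: "y \<in> X \<Longrightarrow> y \<in> orbit G (rep y)"
  and transversal_in_G: "y \<in> X \<Longrightarrow> g y \<in> G"
  and transversal_apply_rep: "y \<in> X \<Longrightarrow> g y (rep y) = y"
  using reps rep_eq transversal by (auto simp: orbit_reps_def)

lemma transversal_stab: "r \<in> R \<Longrightarrow> g r \<in> stab G r"
  using transversal orbit_self[OF subgroup] by (simp add: stab_def)

lemma Fol_r_centralizer: "\<Lambda> \<in> Fol_r G R \<Longrightarrow> r \<in> R \<Longrightarrow> \<Lambda> r \<in> centralizer G (stab G r)"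
  by (simp add: Fol_r_def)

lemma rack_of_on_reps:
  assumes \<Lambda>: "\<Lambda> \<in> Fol_r G R" and r: "r \<in> R"
  shows "rack_of R g \<Lambda> r = \<Lambda> r"
proof -
  have "rep r = r" using rep_eq[OF r orbit_self[OF subgroup]] .
  moreover have "conj (\<Lambda> r) (g r) = \<Lambda> r"
    using conj_centralizer_eq[OF Fol_r_centralizer[OF \<Lambda> r] transversal_stab[OF r]]
      transversal_stab[OF r] G_bij by (simp add: stab_def)
  ultimately show ?thesis by (simp add: rack_of_def)
qed

lemma rack_of_equivariant:
  assumes \<Lambda>: "\<Lambda> \<in> Fol_r G R" and y: "y \<in> X" and h: "h \<in> G"
  shows "rack_of R g \<Lambda> (h y) = conj (rack_of R g \<Lambda> y) h"
proof -
  define r where "r = rep y"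
  have r: "r \<in> R" "y \<in> orbit G r" "g y \<in> G" "g y r = y"
    using rep_in_reps[OF y] in_orbit_rep[OF y] transversal_in_G[OF y] transversal_apply_rep[OF y]
    unfolding r_def by auto
  have hy: "h y \<in> orbit G r" "rep (h y) = r" "g (h y) \<in> G" "g (h y) r = h y"
    using orbit_closed[OF subgroup r(2) h] rep_eq[OF r(1)] transversal r(1) by auto
  \<comment> \<open>both \<open>g (h y)\<close> and \<open>h \<circ> g y\<close> carry \<open>r\<close> to \<open>h y\<close>\<close>
  define k where "k = inv (g (h y)) \<circ> h \<circ> g y"
  have "k \<in> stab G r"
    using r hy h perm_subgroup_comp[OF subgroup] perm_subgroup_inv[OF subgroup]
      G_permutes[THEN permutes_inverses(2)]
    unfolding k_def stab_def by simp
  then have ck: "conj (\<Lambda> r) k = \<Lambda> r"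
    using conj_centralizer_eq[OF Fol_r_centralizer[OF \<Lambda> r(1)]] G_bij by (simp add: stab_def)
  have "h \<circ> g y = g (h y) \<circ> k"
    unfolding k_def using G_permutes[OF hy(3)]
    by (simp add: comp_assoc[symmetric] permutes_inv_o(1))
  then have "conj (rack_of R g \<Lambda> y) h = conj (conj (\<Lambda> r) k) (g (h y))"
    using G_bij r(3) h hy(3) \<open>k \<in> stab G r\<close>
    by (simp add: rack_of_def r_def[symmetric] conj_conj stab_def)
  then show ?thesis
    by (simp add: ck rack_of_def hy(2))
qed

lemma rack_of_centralizer:
  assumes \<Lambda>: "\<Lambda> \<in> Fol_r G R" and y: "y \<in> X"
  shows "rack_of R g \<Lambda> y \<in> centralizer G (stab G y)"
proof -
  have "g y \<in> normalizer X G"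
    using perm_subgroup_subset_normalizer[OF subgroup] transversal_in_G[OF y] by blast
  from normalizer_conj_centralizer[OF this Fol_r_centralizer[OF \<Lambda> rep_in_reps[OF y]]]
  show ?thesis by (simp add: rack_of_def transversal_apply_rep[OF y])
qed

lemma rack_of_center:
  assumes \<Lambda>: "\<Lambda> \<in> Fol_q G R" and y: "y \<in> X"
  shows "rack_of R g \<Lambda> y \<in> center (stab G y)"
proof -
  have "g y \<in> normalizer X G"
    using perm_subgroup_subset_normalizer[OF subgroup] transversal_in_G[OF y] by blast
  moreover have "\<Lambda> (rep y) \<in> center (stab G (rep y))"
    using \<Lambda> rep_in_reps[OF y] by (simp add: Fol_q_def)
  ultimately show ?thesis
    using normalizer_conj_center by (fastforce simp: rack_of_def transversal_apply_rep[OF y])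
qed

lemma rack_of_in_G: "\<Lambda> \<in> Fol_r G R \<Longrightarrow> y \<in> X \<Longrightarrow> rack_of R g \<Lambda> y \<in> G"
  using rack_of_centralizer by (simp add: centralizer_def)

lemma rack_of_permutes: "\<Lambda> \<in> Fol_r G R \<Longrightarrow> y \<in> X \<Longrightarrow> rack_of R g \<Lambda> y permutes X"
  using rack_of_in_G G_permutes by blast

lemma rack_on_rack_of:
  assumes \<Lambda>: "\<Lambda> \<in> Fol_r G R"
  shows "rack_on X (rack_of R g \<Lambda>)"
proof -
  have "conj (rack_of R g \<Lambda> y) (rack_of R g \<Lambda> x) = rack_of R g \<Lambda> (rack_of R g \<Lambda> x y)"
    if "x \<in> X" "y \<in> X" for x y
    using rack_of_equivariant[OF \<Lambda> that(2) rack_of_in_G[OF \<Lambda> that(1)], symmetric] .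
  then show ?thesis
    by (simp add: rack_on_iff_conj[OF rack_of_permutes[OF \<Lambda>]])
qed

lemma quandle_on_rack_of: "\<Lambda> \<in> Fol_q G R \<Longrightarrow> quandle_on X (rack_of R g \<Lambda>)"
  using rack_on_rack_of Fol_q_subset_Fol_r rack_of_center
  by (auto simp: quandle_on_def center_stab_eq)

lemma rack_of_image:
  assumes \<Lambda>: "\<Lambda> \<in> Fol_r G R"
  shows "rack_of R g \<Lambda> ` X = (\<Union>x\<in>R. conj_class G (\<Lambda> x))"
proof
  show "rack_of R g \<Lambda> ` X \<subseteq> (\<Union>x\<in>R. conj_class G (\<Lambda> x))"
  proof (rule image_subsetI)
    fix y assume y: "y \<in> X"
    have "rack_of R g \<Lambda> y \<in> conj_class G (\<Lambda> (rep y))"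
      using transversal_in_G[OF y] by (auto simp: rack_of_def conj_class_def)
    then show "rack_of R g \<Lambda> y \<in> (\<Union>x\<in>R. conj_class G (\<Lambda> x))"
      using rep_in_reps[OF y] by blast
  qed
  show "(\<Union>x\<in>R. conj_class G (\<Lambda> x)) \<subseteq> rack_of R g \<Lambda> ` X"
  proof clarify
    fix x l assume x: "x \<in> R" and "l \<in> conj_class G (\<Lambda> x)"
    then obtain h where h: "h \<in> G" and l: "l = conj (\<Lambda> x) h"
      by (auto simp: conj_class_def)
    have "l = rack_of R g \<Lambda> (h x)"
      using rack_of_equivariant[OF \<Lambda> _ h] rack_of_on_reps[OF \<Lambda> x] x reps_subset l by auto
    moreover have "h x \<in> X"
      using x reps_subset G_permutes[OF h] by (auto simp: permutes_in_image)
    ultimately show "l \<in> rack_of R g \<Lambda> ` X" by blast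
  qed
qed

lemma generates_iff:
  "\<Lambda> \<in> Fol_r G R \<Longrightarrow> generates X G R \<Lambda> \<longleftrightarrow> perm_gen X (rack_of R g \<Lambda> ` X) = G"
  by (simp add: generates_def rack_of_image)

lemma LMlt_rack_of: "\<Lambda> \<in> Fol_r G R \<Longrightarrow> LMlt X (rack_of R g \<Lambda>) = perm_gen X (rack_of R g \<Lambda> ` X)"
  by (simp add: LMlt_def Lperm_eq_self rack_of_permutes)

lemma rack_of_Env_r:
  assumes "\<Lambda> \<in> Env_r X G R"
  shows "rack_on X (rack_of R g \<Lambda>) \<and> LMlt X (rack_of R g \<Lambda>) = G"
proof -
  have \<Lambda>: "\<Lambda> \<in> Fol_r G R" "generates X G R \<Lambda>" using assms by (simp_all add: Env_r_def)
  then show ?thesis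
    using rack_on_rack_of[OF \<Lambda>(1)] LMlt_rack_of[OF \<Lambda>(1)] generates_iff[OF \<Lambda>(1)] by simp
qed

lemma rack_of_Env_q:
  assumes "\<Lambda> \<in> Env_q X G R"
  shows "quandle_on X (rack_of R g \<Lambda>) \<and> LMlt X (rack_of R g \<Lambda>) = G"
proof -
  have "\<Lambda> \<in> Fol_q G R" "\<Lambda> \<in> Env_r X G R"
    using assms Fol_q_subset_Fol_r by (auto simp: Env_q_def Env_r_def)
  then show ?thesis using quandle_on_rack_of rack_of_Env_r by blast
qed

section \<open>The action of the normalizer\<close>

lemma act_in_R: "x \<in> R \<Longrightarrow> act R g f \<Lambda> x = conj (rack_of R g \<Lambda> (inv f x)) f"
  by (simp add: act_def rack_of_def Let_def)

lemma act_notin_R: "x \<notin> R \<Longrightarrow> act R g f \<Lambda> x = id"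
  by (simp add: act_def)

lemma act_Fol_r:
  assumes \<Lambda>: "\<Lambda> \<in> Fol_r G R" and f: "f \<in> normalizer X G"
  shows "act R g f \<Lambda> \<in> Fol_r G R"
  unfolding Fol_r_def
proof (intro CollectI conjI ballI allI impI)
  fix x assume x: "x \<in> R"
  have y: "inv f x \<in> X" using normalizer_inv_in[OF f] x reps_subset by blast
  have "f (inv f x) = x" using permutes_inverses(1)[OF normalizer_permutes[OF f]] .
  with normalizer_conj_centralizer[OF f rack_of_centralizer[OF \<Lambda> y]]
  show "act R g f \<Lambda> x \<in> centralizer G (stab G x)" by (simp add: act_in_R[OF x])
qed (rule act_notin_R)

lemma act_Fol_q:
  assumes \<Lambda>: "\<Lambda> \<in> Fol_q G R" and f: "f \<in> normalizer X G"
  shows "act R g f \<Lambda> \<in> Fol_q G R"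
  unfolding Fol_q_def
proof (intro CollectI conjI ballI allI impI)
  fix x assume x: "x \<in> R"
  have y: "inv f x \<in> X" using normalizer_inv_in[OF f] x reps_subset by blast
  have "f (inv f x) = x" using permutes_inverses(1)[OF normalizer_permutes[OF f]] .
  with normalizer_conj_center[OF f rack_of_center[OF \<Lambda> y]]
  show "act R g f \<Lambda> x \<in> center (stab G x)" by (simp add: act_in_R[OF x])
qed (rule act_notin_R)

lemma rack_of_act:
  assumes \<Lambda>: "\<Lambda> \<in> Fol_r G R" and f: "f \<in> normalizer X G" and z: "z \<in> X"
  shows "rack_of R g (act R g f \<Lambda>) z = conj (rack_of R g \<Lambda> (inv f z)) f"
proof -
  have fp: "f permutes X" and bf: "bij f" using normalizer_permutes[OF f] permutes_bij by blast+
  define u where "u = inv f (rep z)"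
  have u: "u \<in> X" unfolding u_def using normalizer_inv_in[OF f] rep_in_reps[OF z] reps_subset by blast
  define k where "k = conj (g z) (inv f)"
  have k: "k \<in> G" unfolding k_def using normalizer_conj[OF normalizer_inv[OF f] transversal_in_G[OF z]] .
  have fk: "g z \<circ> f = f \<circ> k"
    unfolding k_def conj_def inv_inv_eq[OF bf] by (simp add: o_assoc permutes_inv_o(1)[OF fp])
  have ku: "k u = inv f z"
    unfolding k_def u_def conj_def inv_inv_eq[OF bf] using transversal_apply_rep[OF z]
    by (simp add: permutes_inverses(1)[OF fp])
  have "rack_of R g (act R g f \<Lambda>) z = conj (conj (rack_of R g \<Lambda> u) f) (g z)"
    by (simp add: rack_of_def act_in_R[OF rep_in_reps[OF z]] u_def)
  also have "\<dots> = conj (conj (rack_of R g \<Lambda> u) k) f"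
    using bf G_bij[OF k] G_bij[OF transversal_in_G[OF z]] by (simp add: conj_conj fk)
  also have "\<dots> = conj (rack_of R g \<Lambda> (inv f z)) f"
    by (simp add: rack_of_equivariant[OF \<Lambda> u k, symmetric] ku)
  finally show ?thesis .
qed

lemma act_id:
  assumes \<Lambda>: "\<Lambda> \<in> Fol_r G R"
  shows "act R g id \<Lambda> = \<Lambda>"
proof
  fix x
  show "act R g id \<Lambda> x = \<Lambda> x"
    using \<Lambda> by (cases "x \<in> R") (simp_all add: act_in_R rack_of_on_reps act_notin_R Fol_r_def)
qed

lemma act_comp:
  assumes \<Lambda>: "\<Lambda> \<in> Fol_r G R" and f: "f \<in> normalizer X G" and f': "f' \<in> normalizer X G"
  shows "act R g (f' \<circ> f) \<Lambda> = act R g f' (act R g f \<Lambda>)"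
proof
  fix x
  show "act R g (f' \<circ> f) \<Lambda> x = act R g f' (act R g f \<Lambda>) x"
  proof (cases "x \<in> R")
    case True
    have bij: "bij f" "bij f'" using f f' normalizer_permutes permutes_bij by blast+
    have "inv f' x \<in> X" using normalizer_inv_in[OF f'] True reps_subset by blast
    then show ?thesis
      using bij by (simp add: act_in_R[OF True] rack_of_act[OF \<Lambda> f] o_inv_distrib conj_conj)
  qed (simp add: act_notin_R)
qed

lemma rack_of_act_image:
  assumes \<Lambda>: "\<Lambda> \<in> Fol_r G R" and f: "f \<in> normalizer X G"
  shows "rack_of R g (act R g f \<Lambda>) ` X = (\<lambda>h. conj h f) ` rack_of R g \<Lambda> ` X"
proof -
  have "rack_of R g (act R g f \<Lambda>) ` X = (\<lambda>z. conj (rack_of R g \<Lambda> (inv f z)) f) ` X"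
    using rack_of_act[OF \<Lambda> f] by simp
  also have "\<dots> = (\<lambda>h. conj h f) ` rack_of R g \<Lambda> ` inv f ` X"
    by (simp add: image_image)
  also have "inv f ` X = X"
    using permutes_image[OF permutes_inv[OF normalizer_permutes[OF f]]] .
  finally show ?thesis .
qed

lemma act_generates:
  assumes \<Lambda>: "\<Lambda> \<in> Fol_r G R" and f: "f \<in> normalizer X G" and gen: "generates X G R \<Lambda>"
  shows "generates X G R (act R g f \<Lambda>)"
proof -
  have "perm_gen X (rack_of R g (act R g f \<Lambda>) ` X) = (\<lambda>h. conj h f) ` perm_gen X (rack_of R g \<Lambda> ` X)"
    using perm_gen_conj_image[OF normalizer_permutes[OF f]] rack_of_permutes[OF \<Lambda>]
    by (simp add: rack_of_act_image[OF \<Lambda> f] image_subset_iff)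
  also have "\<dots> = G"
    using gen f by (simp add: generates_iff[OF \<Lambda>] normalizer_def)
  finally show ?thesis
    by (simp add: generates_iff[OF act_Fol_r[OF \<Lambda> f]])
qed

lemma act_Env_r: "\<Lambda> \<in> Env_r X G R \<Longrightarrow> f \<in> normalizer X G \<Longrightarrow> act R g f \<Lambda> \<in> Env_r X G R"
  by (simp add: Env_r_def act_Fol_r act_generates)

lemma act_Env_q:
  assumes "\<Lambda> \<in> Env_q X G R" and f: "f \<in> normalizer X G"
  shows "act R g f \<Lambda> \<in> Env_q X G R"
proof -
  have \<Lambda>: "\<Lambda> \<in> Fol_q G R" "generates X G R \<Lambda>" using assms(1) by (simp_all add: Env_q_def)
  then have "\<Lambda> \<in> Fol_r G R" using Fol_q_subset_Fol_r by blast
  with \<Lambda> f show ?thesis by (simp add: Env_q_def act_Fol_q act_generates)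
qed

lemma act_orbit_closed:
  assumes \<Lambda>: "\<Lambda> \<in> Fol_r G R" and f0: "f0 \<in> normalizer X G" and f: "f \<in> normalizer X G"
    and closed: "\<And>\<Lambda> f. \<Lambda> \<in> S \<Longrightarrow> f \<in> normalizer X G \<Longrightarrow> act R g f \<Lambda> \<in> S"
    and S: "act R g f0 \<Lambda> \<in> S"
  shows "act R g f \<Lambda> \<in> S"
proof -
  have "(f \<circ> inv f0) \<circ> f0 = f"
    using permutes_inv_o(2)[OF normalizer_permutes[OF f0]] by (simp add: o_assoc[symmetric])
  then have "act R g f \<Lambda> = act R g (f \<circ> inv f0) (act R g f0 \<Lambda>)"
    using act_comp[OF \<Lambda> f0 normalizer_comp[OF normalizer_inv[OF f0] f]] by simp
  then show ?thesis
    using closed[OF S normalizer_comp[OF normalizer_inv[OF f0] f]] by simp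
qed

section \<open>Orbits and isomorphism types\<close>

lemma rack_hom_iff_conj:
  assumes "\<Lambda> \<in> Fol_r G R" "\<Lambda>' \<in> Fol_r G R" and fp: "f permutes X"
  shows "(\<forall>x\<in>X. \<forall>y\<in>X. f (rack_of R g \<Lambda> x y) = rack_of R g \<Lambda>' (f x) (f y)) \<longleftrightarrow>
    (\<forall>x\<in>X. conj (rack_of R g \<Lambda> x) f = rack_of R g \<Lambda>' (f x))"
  by (rule permutes_hom_iff_conj[OF fp]) (use assms rack_of_permutes in blast)+

lemma rack_iso_act:
  assumes \<Lambda>: "\<Lambda> \<in> Fol_r G R" and f: "f \<in> normalizer X G"
  shows "rack_iso X (rack_of R g \<Lambda>) (rack_of R g (act R g f \<Lambda>))"
  unfolding rack_iso_def
proof (intro exI conjI)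
  have fp: "f permutes X" using normalizer_permutes[OF f] .
  show "bij_betw f X X" using permutes_imp_bij[OF fp] .
  have "conj (rack_of R g \<Lambda> x) f = rack_of R g (act R g f \<Lambda>) (f x)" if "x \<in> X" for x
    using rack_of_act[OF \<Lambda> f] that fp by (simp add: permutes_in_image permutes_inverses(2))
  then show "\<forall>x\<in>X. \<forall>y\<in>X. f (rack_of R g \<Lambda> x y) = rack_of R g (act R g f \<Lambda>) (f x) (f y)"
    by (simp add: rack_hom_iff_conj[OF \<Lambda> act_Fol_r[OF \<Lambda> f] fp])
qed

lemma normalizer_if_conj_rack_of:
  assumes \<Lambda>: "\<Lambda> \<in> Fol_r G R" "generates X G R \<Lambda>"
    and \<Lambda>': "\<Lambda>' \<in> Fol_r G R" "generates X G R \<Lambda>'"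
    and fp: "f permutes X"
    and conj_f: "\<And>x. x \<in> X \<Longrightarrow> conj (rack_of R g \<Lambda> x) f = rack_of R g \<Lambda>' (f x)"
  shows "f \<in> normalizer X G"
proof -
  let ?L = "rack_of R g \<Lambda>" and ?L' = "rack_of R g \<Lambda>'"
  have "(\<lambda>h. conj h f) ` ?L ` X = (\<lambda>x. ?L' (f x)) ` X"
    unfolding image_image using conj_f by (rule image_cong[OF refl])
  also have "\<dots> = ?L' ` X"
    using permutes_image[OF fp] by (metis image_image)
  finally have gens: "(\<lambda>h. conj h f) ` ?L ` X = ?L' ` X" .
  have "(\<lambda>h. conj h f) ` G = (\<lambda>h. conj h f) ` perm_gen X (?L ` X)"
    using \<Lambda> by (simp add: generates_iff)
  also have "\<dots> = perm_gen X (?L' ` X)"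
    using perm_gen_conj_image[OF fp] rack_of_permutes[OF \<Lambda>(1)] gens by (simp add: image_subset_iff)
  also have "\<dots> = G"
    using \<Lambda>' by (simp add: generates_iff)
  finally show ?thesis using fp by (simp add: normalizer_def)
qed

lemma act_eq_if_conj_rack_of:
  assumes \<Lambda>': "\<Lambda>' \<in> Fol_r G R" and f: "f \<in> normalizer X G"
    and conj_f: "\<And>x. x \<in> X \<Longrightarrow> conj (rack_of R g \<Lambda> x) f = rack_of R g \<Lambda>' (f x)"
  shows "act R g f \<Lambda> = \<Lambda>'"
proof
  fix x
  show "act R g f \<Lambda> x = \<Lambda>' x"
  proof (cases "x \<in> R")
    case True
    then have "inv f x \<in> X" "f (inv f x) = x"
      using normalizer_inv_in[OF f] reps_subset permutes_inverses(1)[OF normalizer_permutes[OF f]]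
      by auto
    then show ?thesis
      using conj_f True by (simp add: act_in_R rack_of_on_reps[OF \<Lambda>'])
  next
    case False
    then show ?thesis using \<Lambda>' by (simp add: act_notin_R Fol_r_def)
  qed
qed

lemma act_if_rack_iso:
  assumes \<Lambda>: "\<Lambda> \<in> Fol_r G R" "generates X G R \<Lambda>"
    and \<Lambda>': "\<Lambda>' \<in> Fol_r G R" "generates X G R \<Lambda>'"
    and iso: "rack_iso X (rack_of R g \<Lambda>) (rack_of R g \<Lambda>')"
  shows "\<exists>f\<in>normalizer X G. act R g f \<Lambda> = \<Lambda>'"
proof -
  obtain \<phi> where \<phi>: "bij_betw \<phi> X X"
    and hom: "\<forall>x\<in>X. \<forall>y\<in>X. \<phi> (rack_of R g \<Lambda> x y) = rack_of R g \<Lambda>' (\<phi> x) (\<phi> y)"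
    using iso unfolding rack_iso_def by blast
  define f where "f = restrict_id \<phi> X"
  have fp: "f permutes X" unfolding f_def using permutes_restrict_id[OF \<phi>] .
  have "\<forall>x\<in>X. \<forall>y\<in>X. f (rack_of R g \<Lambda> x y) = rack_of R g \<Lambda>' (f x) (f y)"
    using hom rack_on_rack_of[OF \<Lambda>(1)] by (simp add: f_def rack_on_def)
  then have conj_f: "\<And>x. x \<in> X \<Longrightarrow> conj (rack_of R g \<Lambda> x) f = rack_of R g \<Lambda>' (f x)"
    by (simp add: rack_hom_iff_conj[OF \<Lambda>(1) \<Lambda>'(1) fp])
  have f: "f \<in> normalizer X G"
    using normalizer_if_conj_rack_of[OF \<Lambda> \<Lambda>' fp conj_f] .
  with act_eq_if_conj_rack_of[OF \<Lambda>'(1) f conj_f] show ?thesis by blast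
qed

lemma act_orbit_iff_rack_iso:
  assumes "\<Lambda> \<in> Fol_r G R" "generates X G R \<Lambda>" "\<Lambda>' \<in> Fol_r G R" "generates X G R \<Lambda>'"
  shows "(\<exists>f\<in>normalizer X G. act R g f \<Lambda> = \<Lambda>') \<longleftrightarrow> rack_iso X (rack_of R g \<Lambda>) (rack_of R g \<Lambda>')"
  using rack_iso_act act_if_rack_iso assms by blast

lemma rack_of_envelope_of_rack:
  assumes rack: "rack_on X op" and lmlt: "LMlt X op = G" and y: "y \<in> X"
  shows "rack_of R g (envelope_of_rack X R op) y = Lperm X op y"
  using Lperm_equivariant[OF rack, of "g y" "rep y"] lmlt rep_in_reps[OF y] transversal_in_G[OF y]
    transversal_apply_rep[OF y] reps_subset
  by (auto simp: rack_of_def envelope_of_rack_def)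

lemma envelope_of_rack_Fol_r:
  assumes rack: "rack_on X op" and lmlt: "LMlt X op = G"
  shows "envelope_of_rack X R op \<in> Fol_r G R"
  using Lperm_in_centralizer_stab[OF rack] lmlt reps_subset
  by (auto simp: Fol_r_def envelope_of_rack_def)

lemma envelope_of_rack_Env_r:
  assumes rack: "rack_on X op" and lmlt: "LMlt X op = G"
  shows "envelope_of_rack X R op \<in> Env_r X G R"
proof -
  have "rack_of R g (envelope_of_rack X R op) ` X = Lperm X op ` X"
    using rack_of_envelope_of_rack[OF rack lmlt] by simp
  then show ?thesis
    using envelope_of_rack_Fol_r[OF rack lmlt] lmlt
    by (simp add: Env_r_def generates_iff LMlt_def)
qed

lemma envelope_of_rack_Env_q:
  assumes quandle: "quandle_on X op" and lmlt: "LMlt X op = G"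
  shows "envelope_of_rack X R op \<in> Env_q X G R"
proof -
  have rack: "rack_on X op" using quandle by (simp add: quandle_on_def)
  have "envelope_of_rack X R op \<in> Fol_q G R"
    using Lperm_in_center_stab[OF quandle] lmlt reps_subset
    by (auto simp: Fol_q_def envelope_of_rack_def)
  then show ?thesis
    using envelope_of_rack_Env_r[OF rack lmlt] by (simp add: Env_q_def Env_r_def)
qed

lemma rack_iso_envelope_of_rack:
  assumes rack: "rack_on X op" and lmlt: "LMlt X op = G"
  shows "rack_iso X op (rack_of R g (envelope_of_rack X R op))"
  unfolding rack_iso_def
  by (rule exI[of _ id]) (simp add: rack_of_envelope_of_rack[OF rack lmlt] Lperm_def)

end

theorem theorem3p6:
  fixes X :: "'a set" and G :: "('a \<Rightarrow> 'a) set" and R :: "'a set"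
    and g :: "'a \<Rightarrow> ('a \<Rightarrow> 'a)"
  assumes "X \<noteq> {}"
    and "perm_subgroup X G"
    and "orbit_reps X G R"
    and "\<forall>x\<in>R. \<forall>y\<in>orbit G x. g y \<in> G \<and> g y x = y"
  defines "F \<equiv> normalizer X G"
  shows
    \<comment> \<open>(i) action on each of the four sets\<close>
    "(\<forall>S \<in> {Fol_r G R, Fol_q G R, Env_r X G R, Env_q X G R}.
        (\<forall>\<Lambda>\<in>S. \<forall>f\<in>F. act R g f \<Lambda> \<in> S) \<and>
        (\<forall>\<Lambda>\<in>S. act R g id \<Lambda> = \<Lambda>) \<and>
        (\<forall>\<Lambda>\<in>S. \<forall>f\<in>F. \<forall>f'\<in>F. act R g (f' \<circ> f) \<Lambda> = act R g f' (act R g f \<Lambda>)))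
     \<and>
     \<comment> \<open>(ii) racks: the map Lambda to its rack induces a bijection orbits <-> iso types\<close>
     (\<forall>\<Lambda>\<in>Env_r X G R. rack_on X (rack_of R g \<Lambda>) \<and> LMlt X (rack_of R g \<Lambda>) = G)
     \<and> (\<forall>\<Lambda>\<in>Env_r X G R. \<forall>\<Lambda>'\<in>Env_r X G R.
          (\<exists>f\<in>F. act R g f \<Lambda> = \<Lambda>') \<longleftrightarrow> rack_iso X (rack_of R g \<Lambda>) (rack_of R g \<Lambda>'))
     \<and> (\<forall>op. rack_on X op \<and> LMlt X op = G \<longrightarrow>
          (\<exists>\<Lambda>\<in>Env_r X G R. rack_iso X op (rack_of R g \<Lambda>)))
     \<and>
     \<comment> \<open>(ii) quandles\<close>
     (\<forall>\<Lambda>\<in>Env_q X G R. quandle_on X (rack_of R g \<Lambda>) \<and> LMlt X (rack_of R g \<Lambda>) = G)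
     \<and> (\<forall>\<Lambda>\<in>Env_q X G R. \<forall>\<Lambda>'\<in>Env_q X G R.
          (\<exists>f\<in>F. act R g f \<Lambda> = \<Lambda>') \<longleftrightarrow> rack_iso X (rack_of R g \<Lambda>) (rack_of R g \<Lambda>'))
     \<and> (\<forall>op. quandle_on X op \<and> LMlt X op = G \<longrightarrow>
          (\<exists>\<Lambda>\<in>Env_q X G R. rack_iso X op (rack_of R g \<Lambda>)))
     \<and>
     \<comment> \<open>(iii)\<close>
     (\<forall>\<Lambda>\<in>Fol_r G R. (\<exists>f\<in>F. act R g f \<Lambda> \<in> Env_r X G R) \<longrightarrow>
          (\<forall>f\<in>F. act R g f \<Lambda> \<in> Env_r X G R))
     \<and> (\<forall>\<Lambda>\<in>Fol_q G R. (\<exists>f\<in>F. act R g f \<Lambda> \<in> Env_q X G R) \<longrightarrow>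
          (\<forall>f\<in>F. act R g f \<Lambda> \<in> Env_q X G R))"
proof -
  interpret orbit_transversal X G R g
    using assms(2-4) by unfold_locales
  have Fol: "Fol_q G R \<subseteq> Fol_r G R" "Env_r X G R \<subseteq> Fol_r G R" "Env_q X G R \<subseteq> Fol_r G R"
    using Fol_q_subset_Fol_r by (auto simp: Env_r_def Env_q_def)
  show ?thesis
    unfolding F_def
    apply (intro conjI)
    subgoal using Fol by (auto intro: act_Fol_r act_Fol_q act_Env_r act_Env_q act_id act_comp)
    subgoal using rack_of_Env_r by blast
    subgoal by (simp add: Env_r_def act_orbit_iff_rack_iso)
    subgoal using envelope_of_rack_Env_r rack_iso_envelope_of_rack by blast
    subgoal using rack_of_Env_q by blast
    subgoal using Fol(1) by (simp add: Env_q_def act_orbit_iff_rack_iso subsetD)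
    subgoal using envelope_of_rack_Env_q rack_iso_envelope_of_rack by (auto simp: quandle_on_def)
    subgoal using act_orbit_closed[OF _ _ _ act_Env_r] by blast
    subgoal using act_orbit_closed[OF _ _ _ act_Env_q] Fol(1) by blast
    done
qed

end
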